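(* Let $P(X)=\prod_{i=1}^n(X-x_i)=\sum_{i=0}^n a_iX^i$ ($a_n=1$) and $G^{ij}=\Gamma_{\mathbb E}(a_i,a_j)$, $0\le i,j\le n-1$, regarded as polynomial functions of $(a_0,\dots,a_{n-1})$. Then on the set $\mathcal D$ of coefficient vectors of polynomials with $n$ distinct real roots: (1) $\mathrm{discr}(P)=\det(G^{ij})_{0\le i,j\le n-1}$; (2) for every $i\in\{0,\dots,n-1\}$, $\sum_j G^{ij}\,\partial_{a_j}\log\mathrm{discr}(P)=2\sum_j\partial_{a_j}G^{ij}$; (3) $\sum_{i,j}X^iG^{ij}\,\partial_{a_j}\log\mathrm{discr}(P)=-P''(X)$, i.e. $\Gamma_{\mathbb E}\big(P(X),\log\mathrm{discr}(P)\big)=-P''(X)$.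
   Context: $\Gamma_{\mathbb E}(f,g)=\sum_i\partial_{x_i}f\,\partial_{x_i}g$ on $\mathbb{R}^n$. For $P=\prod(X-x_i)$, $\mathrm{discr}(P)=\prod_{i<j}(x_i-x_j)^2$, a polynomial in the coefficients. $P''$ is the second derivative in $X$. *)

theory Defs
  imports "HOL-Analysis.Analysis" "HOL-Computational_Algebra.Polynomial"
begin

text \<open>Points of R^n and coefficient vectors (a_0,...,a_{n-1}) are modelled as
  functions nat => real; only the indices below n matter.\<close>

definition partial :: "nat \<Rightarrow> ((nat \<Rightarrow> real) \<Rightarrow> real) \<Rightarrow> (nat \<Rightarrow> real) \<Rightarrow> real" where
  "partial k f x = deriv (\<lambda>t. f (x(k := t))) (x k)"

definition GammaE :: "nat \<Rightarrow> ((nat \<Rightarrow> real) \<Rightarrow> real) \<Rightarrow> ((nat \<Rightarrow> real) \<Rightarrow> real) \<Rightarrow> (nat \<Rightarrow> real) \<Rightarrow> real" where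
  "GammaE n f g x = (\<Sum>k<n. partial k f x * partial k g x)"

definition rootpoly :: "nat \<Rightarrow> (nat \<Rightarrow> real) \<Rightarrow> real poly" where
  "rootpoly n x = (\<Prod>k<n. [:- x k, 1:])"

definition coeffun :: "nat \<Rightarrow> nat \<Rightarrow> (nat \<Rightarrow> real) \<Rightarrow> real" where
  "coeffun n i x = coeff (rootpoly n x) i"

definition poly_of :: "nat \<Rightarrow> (nat \<Rightarrow> real) \<Rightarrow> real poly" where
  "poly_of n a = monom 1 n + (\<Sum>i<n. monom (a i) i)"

definition Dset :: "nat \<Rightarrow> (nat \<Rightarrow> real) set" where
  "Dset n = {a. \<exists>x. inj_on x {..<n} \<and> poly_of n a = rootpoly n x}"

definition rootvec :: "nat \<Rightarrow> (nat \<Rightarrow> real) \<Rightarrow> (nat \<Rightarrow> real)" where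
  "rootvec n a = (SOME x. poly_of n a = rootpoly n x)"

text \<open>discr(P) = prod_{i<j} (x_i - x_j)^2 as a function of the coefficients
  (well defined, being symmetric in the roots).\<close>
definition discr :: "nat \<Rightarrow> (nat \<Rightarrow> real) \<Rightarrow> real" where
  "discr n a = (let x = rootvec n a in
     (\<Prod>p\<in>{(i,j). i < j \<and> j < n}. (x (fst p) - x (snd p))^2))"

definition Gmat :: "nat \<Rightarrow> nat \<Rightarrow> nat \<Rightarrow> (nat \<Rightarrow> real) \<Rightarrow> real" where
  "Gmat n i j a = GammaE n (coeffun n i) (coeffun n j) (rootvec n a)"

definition detn :: "nat \<Rightarrow> (nat \<Rightarrow> nat \<Rightarrow> real) \<Rightarrow> real" where
  "detn n M = (\<Sum>p | p permutes {..<n}. of_int (sign p) * (\<Prod>i<n. M i (p i)))"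

end

theory Submission
  imports Defs "Jordan_Normal_Form.Determinant"
begin

text \<open>Write \<open>P = (X - x_k) Q_k\<close>. Since \<open>\<partial>a_i/\<partial>x_k = -[X^i] Q_k\<close>, the matrix \<open>G\<close> equals \<open>J J\<^sup>T\<close>
  with \<open>J_ik = [X^i] Q_k\<close>, and the Vandermonde matrix of the roots turns \<open>J\<close> into the diagonal
  matrix \<open>(Q_k(x_k))\<close>; hence \<open>det G = (det J)\<^sup>2 = discr P\<close>. A telescoping identity expresses
  \<open>G^ij\<close> through the coefficients of \<open>P\<close>, affinely in \<open>a_j\<close>, whence
  \<open>2 \<Sum>_j \<partial>G^ij/\<partial>a_j = -[X^i] P''\<close>. Moving one root \<open>x_k\<close> moves the coefficient vector along a
  line, so the chain rule gives \<open>\<partial>log discr/\<partial>x_k = -\<Sum>_j [X^j] Q_k \<partial>log discr/\<partial>a_j\<close>; directly,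
  \<open>\<partial>log discr/\<partial>x_k = \<Sum>_(l\<noteq>k) 2/(x_k - x_l)\<close>, and \<open>\<Sum>_k Q_k \<Sum>_(l\<noteq>k) 2/(x_k - x_l) = P''\<close>.
  Contracting with \<open>G = J J\<^sup>T\<close> gives \<open>\<Sum>_j G^ij \<partial>log discr/\<partial>a_j = -[X^i] P''\<close>. Derivatives in
  the coefficients make sense because simple real roots persist under perturbation, so near
  every point of \<open>\<D>\<close> the function \<open>discr\<close> coincides with the polynomial \<open>det G\<close>.\<close>

definition cofactor_poly :: "nat \<Rightarrow> (nat \<Rightarrow> real) \<Rightarrow> nat \<Rightarrow> real poly" where
  "cofactor_poly n x k = (\<Prod>l\<in>{..<n}-{k}. [:- x l, 1:])"

lemma rootpoly_eq_factor_cofactor_poly: "k < n \<Longrightarrow> rootpoly n x = [:- x k, 1:] * cofactor_poly n x k"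
  unfolding rootpoly_def cofactor_poly_def by (subst prod.remove[of _ k]) auto

lemma cofactor_poly_fun_upd [simp]: "cofactor_poly n (x(k := t)) k = cofactor_poly n x k"
  unfolding cofactor_poly_def by (rule prod.cong) auto

lemma linear_factor_mult: "[:- (c::real), 1:] * Q = pCons 0 Q - Polynomial.smult c Q"
  by (simp add: mult_pCons_left)

lemma coeffun_fun_upd:
  "k < n \<Longrightarrow> coeffun n i (x(k := t)) = coeff (pCons 0 (cofactor_poly n x k)) i + t * (- coeff (cofactor_poly n x k) i)"
  unfolding coeffun_def by (subst rootpoly_eq_factor_cofactor_poly[of k n]) (simp_all add: linear_factor_mult)

lemma partial_affine:
  assumes "\<And>t. f (x(k := t)) = A + t * B"
  shows "partial k f x = B"
proof -
  have "((\<lambda>t. A + t * B) has_real_derivative B) (at (x k))"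
    by (auto intro!: derivative_eq_intros)
  then show ?thesis
    unfolding partial_def assms by (rule DERIV_imp_deriv)
qed

lemma partial_coeffun: "k < n \<Longrightarrow> partial k (coeffun n i) x = - coeff (cofactor_poly n x k) i"
  by (rule partial_affine, rule coeffun_fun_upd)

lemma partial_poly_rootpoly: "k < n \<Longrightarrow> partial k (\<lambda>y. poly (rootpoly n y) X) x = - poly (cofactor_poly n x k) X"
  by (rule partial_affine[where A = "X * poly (cofactor_poly n x k) X"])
     (simp add: rootpoly_eq_factor_cofactor_poly[of k n] algebra_simps)

lemma GammaE_coeffun:
  "GammaE n (coeffun n i) (coeffun n j) x = (\<Sum>k<n. coeff (cofactor_poly n x k) i * coeff (cofactor_poly n x k) j)"
  unfolding GammaE_def by (rule sum.cong) (auto simp: partial_coeffun)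

lemma pderiv_rootpoly: "pderiv (rootpoly n x) = (\<Sum>k<n. cofactor_poly n x k)"
  unfolding rootpoly_def cofactor_poly_def pderiv_prod by (rule sum.cong) (auto simp: pderiv_pCons)

lemma degree_rootpoly: "degree (rootpoly n x) = n"
  unfolding rootpoly_def by (subst degree_prod_eq_sum_degree) auto

lemma coeff_rootpoly_degree: "coeff (rootpoly n x) n = 1"
  using lead_coeff_prod[of "\<lambda>l. [:- x l, 1:]" "{..<n}"] degree_rootpoly[of n x]
  unfolding rootpoly_def by simp

lemma degree_cofactor_poly_less: "k < n \<Longrightarrow> degree (cofactor_poly n x k) < n"
  unfolding cofactor_poly_def by (subst degree_prod_eq_sum_degree) (auto simp: card_Diff_singleton)

subsection \<open>The Gram matrix as a polynomial in the coefficients\<close>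

text \<open>If \<open>P = (X - c) Q\<close>, the sum below with \<open>Q\<close> in place of \<open>P'\<close> telescopes to \<open>Q_i Q_j\<close>;
  summing over the roots, where \<open>P' = \<Sum>_k Q_k\<close>, yields \<open>G^ij\<close>.\<close>

definition gram_poly :: "nat \<Rightarrow> nat \<Rightarrow> real poly \<Rightarrow> real" where
  "gram_poly i j P =
     (\<Sum>t\<le>i. coeff (pderiv P) (i-t) * coeff P (j+1+t) - coeff P (i-t) * coeff (pderiv P) (j+1+t))"

lemma telescoping_linear_factor:
  assumes P: "P = [:- (c::real), 1:] * Q"
  shows "(\<Sum>t\<le>i. coeff Q (i-t) * coeff P (j+1+t) - coeff P (i-t) * coeff Q (j+1+t)) = coeff Q i * coeff Q j"
proof -
  define f where "f t = coeff Q (i-t) * coeff Q (j+t)" for t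
  have coeff_P: "coeff P m = (if m = 0 then 0 else coeff Q (m-1)) - c * coeff Q m" for m
    unfolding P linear_factor_mult by (cases m) auto
  have "(\<Sum>t\<le>i. coeff Q (i-t) * coeff P (j+1+t) - coeff P (i-t) * coeff Q (j+1+t))
      = (\<Sum>t\<le>i. f t - (if t < i then f (Suc t) else 0))"
    by (rule sum.cong) (auto simp: coeff_P f_def algebra_simps Suc_diff_Suc)
  also have "\<dots> = (\<Sum>t\<le>i. f t) - (\<Sum>t<i. f (Suc t))"
    by (simp add: sum_subtractf lessThan_Suc_atMost[symmetric])
  also have "(\<Sum>t\<le>i. f t) = f 0 + (\<Sum>t<i. f (Suc t))"
    by (cases i) (simp_all only: sum.atMost_Suc_shift lessThan_Suc_atMost, simp)
  finally show ?thesis by (simp add: f_def)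
qed

lemma gram_poly_rootpoly:
  "gram_poly i j (rootpoly n x) = (\<Sum>k<n. coeff (cofactor_poly n x k) i * coeff (cofactor_poly n x k) j)"
proof -
  let ?P = "rootpoly n x" and ?Q = "cofactor_poly n x"
  have "gram_poly i j ?P
      = (\<Sum>t\<le>i. \<Sum>k<n. coeff (?Q k) (i-t) * coeff ?P (j+1+t) - coeff ?P (i-t) * coeff (?Q k) (j+1+t))"
    unfolding gram_poly_def pderiv_rootpoly coeff_sum
    by (simp add: sum_distrib_left sum_distrib_right sum_subtractf)
  also have "\<dots> = (\<Sum>k<n. \<Sum>t\<le>i. coeff (?Q k) (i-t) * coeff ?P (j+1+t) - coeff ?P (i-t) * coeff (?Q k) (j+1+t))"
    by (rule sum.swap)
  also have "\<dots> = (\<Sum>k<n. coeff (?Q k) i * coeff (?Q k) j)"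
    by (rule sum.cong[OF refl], rule telescoping_linear_factor, rule rootpoly_eq_factor_cofactor_poly) auto
  finally show ?thesis .
qed

subsection \<open>The determinant of the Gram matrix\<close>

definition ordered_pairs :: "nat \<Rightarrow> (nat \<times> nat) set" where
  "ordered_pairs n = {(i,j). i < j \<and> j < n}"

definition root_discr :: "nat \<Rightarrow> (nat \<Rightarrow> real) \<Rightarrow> real" where
  "root_discr n x = (\<Prod>p\<in>ordered_pairs n. (x (fst p) - x (snd p))^2)"

lemma finite_ordered_pairs [simp]: "finite (ordered_pairs n)"
  by (rule finite_subset[of _ "{..<n} \<times> {..<n}"]) (auto simp: ordered_pairs_def)

lemma detn_eq_det: "detn n M = det (mat n n (\<lambda>(i,j). M i j))"
proof -
  have "det (mat n n (\<lambda>(i,j). M i j)) =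
    (\<Sum>p | p permutes {0..<n}. of_int (sign p) * (\<Prod>i = 0..<n. mat n n (\<lambda>(i,j). M i j) $$ (i, p i)))"
    by (rule det_def') simp
  also have "\<dots> = detn n M"
    unfolding detn_def atLeast0LessThan
  proof (rule sum.cong[OF refl], rule arg_cong[where f="\<lambda>x. _ * x"], rule prod.cong[OF refl])
    fix p i assume "p \<in> {p. p permutes {..<n}}" and i: "i \<in> {..<n}"
    then have "p i < n" by (auto dest: permutes_in_image)
    then show "mat n n (\<lambda>(i,j). M i j) $$ (i, p i) = M i (p i)" using i by simp
  qed
  finally show ?thesis by simp
qed

lemma det_upper_triangular_prod:
  assumes "A \<in> carrier_mat n n" "\<And>i j. i < n \<Longrightarrow> j < i \<Longrightarrow> A $$ (i,j) = 0"
  shows "det A = (\<Prod>i<n. A $$ (i,i))"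
  using assms
  by (subst det_upper_triangular[of _ n]) (auto simp: upper_triangular_def prod_list_diag_prod atLeast0LessThan)

lemma det_lower_triangular_prod:
  assumes "A \<in> carrier_mat n n" "\<And>i j. j < n \<Longrightarrow> i < j \<Longrightarrow> A $$ (i,j) = 0"
  shows "det A = (\<Prod>i<n. A $$ (i,i))"
  using assms by (subst det_lower_triangular[of n]) (auto simp: prod_list_diag_prod atLeast0LessThan)

definition cofactor_mat :: "nat \<Rightarrow> (nat \<Rightarrow> real) \<Rightarrow> real mat" where
  "cofactor_mat n x = mat n n (\<lambda>(i,k). coeff (cofactor_poly n x k) i)"

lemma cofactor_mat_carrier: "cofactor_mat n x \<in> carrier_mat n n"
  by (simp add: cofactor_mat_def)

lemma gram_mat_rootpoly:
  "mat n n (\<lambda>(i,j). gram_poly i j (rootpoly n x)) = cofactor_mat n x * transpose_mat (cofactor_mat n x)"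
  by (rule eq_matI)
     (auto simp: cofactor_mat_def gram_poly_rootpoly scalar_prod_def atLeast0LessThan intro!: sum.cong)

lemma det_gram_rootpoly: "detn n (\<lambda>i j. gram_poly i j (rootpoly n x)) = det (cofactor_mat n x) ^ 2"
proof -
  have "transpose_mat (cofactor_mat n x) \<in> carrier_mat n n"
    using cofactor_mat_carrier by simp
  then show ?thesis
    using det_mult[OF cofactor_mat_carrier] det_transpose[OF cofactor_mat_carrier]
    by (simp add: detn_eq_det gram_mat_rootpoly power2_eq_square)
qed

lemma cofactor_poly_eq_of_eq_roots:
  assumes "k < n" "l < n" "k \<noteq> l" "x k = x l"
  shows "cofactor_poly n x k = cofactor_poly n x l"
proof -
  have "cofactor_poly n x k = [:- x l, 1:] * (\<Prod>m\<in>{..<n}-{k}-{l}. [:- x m, 1:])"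
    unfolding cofactor_poly_def using assms by (subst prod.remove[of _ l]) auto
  moreover have "cofactor_poly n x l = [:- x k, 1:] * (\<Prod>m\<in>{..<n}-{l}-{k}. [:- x m, 1:])"
    unfolding cofactor_poly_def using assms by (subst prod.remove[of _ k]) auto
  moreover have "{..<n}-{k}-{l} = {..<n}-{l}-{k}" by auto
  ultimately show ?thesis using assms by simp
qed

lemma det_cofactor_mat_not_inj:
  assumes "\<not> inj_on x {..<n}"
  shows "det (cofactor_mat n x) = 0"
proof -
  obtain k l where kl: "k < n" "l < n" "k \<noteq> l" "x k = x l"
    using assms unfolding inj_on_def by auto
  show ?thesis
  proof (rule det_identical_columns[OF cofactor_mat_carrier kl(3,1,2)])
    show "col (cofactor_mat n x) k = col (cofactor_mat n x) l"
      by (rule eq_vecI) (use kl cofactor_poly_eq_of_eq_roots[OF kl] in \<open>auto simp: cofactor_mat_def\<close>)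
  qed
qed

lemma root_discr_eq_0_iff: "root_discr n x = 0 \<longleftrightarrow> \<not> inj_on x {..<n}"
proof
  assume "root_discr n x = 0"
  then obtain i j where "i < j" "j < n" "x i = x j"
    unfolding root_discr_def prod_zero_iff[OF finite_ordered_pairs] by (auto simp: ordered_pairs_def)
  then show "\<not> inj_on x {..<n}"
    by (auto simp: inj_on_def)
next
  assume "\<not> inj_on x {..<n}"
  then obtain i j where ij: "i < n" "j < n" "i \<noteq> j" "x i = x j"
    by (auto simp: inj_on_def)
  show "root_discr n x = 0"
    unfolding root_discr_def
    by (rule prod_zero, simp, rule bexI[of _ "(min i j, max i j)"])
       (use ij in \<open>auto simp: ordered_pairs_def min_def max_def\<close>)
qed

lemma root_discr_pos: "inj_on x {..<n} \<Longrightarrow> root_discr n x > 0"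
  using root_discr_eq_0_iff[of n x] prod_nonneg[of "ordered_pairs n" "\<lambda>p. (x (fst p) - x (snd p))^2"]
  by (simp add: root_discr_def less_le)

text \<open>To compute \<open>det J\<close>, multiply by the Vandermonde matrix \<open>W\<close>: \<open>W J = (Q_k(x_m))\<close> is
  diagonal, while \<open>W\<close> times the unitriangular matrix of the Newton basis is triangular.\<close>

definition vandermonde_mat :: "nat \<Rightarrow> (nat \<Rightarrow> real) \<Rightarrow> real mat" where
  "vandermonde_mat n x = mat n n (\<lambda>(m,i). x m ^ i)"

definition newton_poly :: "(nat \<Rightarrow> real) \<Rightarrow> nat \<Rightarrow> real poly" where
  "newton_poly x j = (\<Prod>l<j. [:- x l, 1:])"

definition newton_mat :: "nat \<Rightarrow> (nat \<Rightarrow> real) \<Rightarrow> real mat" where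
  "newton_mat n x = mat n n (\<lambda>(i,j). coeff (newton_poly x j) i)"

lemma degree_newton_poly: "degree (newton_poly x j) = j"
  unfolding newton_poly_def by (subst degree_prod_eq_sum_degree) auto

lemma coeff_newton_poly_degree: "coeff (newton_poly x j) j = 1"
  using lead_coeff_prod[of "\<lambda>l. [:- x l, 1:]" "{..<j}"] degree_newton_poly[of x j]
  unfolding newton_poly_def by simp

lemma poly_eq_sum_below: "degree (p::real poly) < n \<Longrightarrow> poly p z = (\<Sum>i<n. coeff p i * z ^ i)"
  by (subst poly_altdef, rule sum.mono_neutral_left) (auto simp: coeff_eq_0)

lemma poly_eq_sum_coeff_below:
  assumes "\<And>i. n \<le> i \<Longrightarrow> coeff p i = 0"
  shows "poly p (X::real) = (\<Sum>i<n. coeff p i * X ^ i)"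
proof (cases "p = 0")
  case False
  then have "degree p < n"
    using assms leading_coeff_0_iff not_less by blast
  then show ?thesis by (rule poly_eq_sum_below)
qed simp

lemma vandermonde_mult_poly_mat:
  assumes "\<And>k. k < n \<Longrightarrow> degree (q k) < n"
  shows "vandermonde_mat n x * mat n n (\<lambda>(i,k). coeff (q k) i) = mat n n (\<lambda>(m,k). poly (q k) (x m))"
  by (rule eq_matI)
     (auto simp: vandermonde_mat_def scalar_prod_def atLeast0LessThan assms poly_eq_sum_below[of _ n]
        mult.commute intro!: sum.cong)

lemma det_vandermonde_mat: "det (vandermonde_mat n x) = (\<Prod>m<n. \<Prod>l<m. x m - x l)"
proof -
  have V: "vandermonde_mat n x \<in> carrier_mat n n" and N: "newton_mat n x \<in> carrier_mat n n"
    by (auto simp: vandermonde_mat_def newton_mat_def)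
  have VN: "vandermonde_mat n x * newton_mat n x = mat n n (\<lambda>(m,j). poly (newton_poly x j) (x m))"
    unfolding newton_mat_def by (rule vandermonde_mult_poly_mat) (simp add: degree_newton_poly)
  have "det (newton_mat n x) = (\<Prod>i<n. newton_mat n x $$ (i,i))"
    by (rule det_upper_triangular_prod[OF N]) (auto simp: newton_mat_def coeff_eq_0 degree_newton_poly)
  also have "\<dots> = 1"
    by (auto simp: newton_mat_def coeff_newton_poly_degree intro!: prod.neutral)
  finally have "det (vandermonde_mat n x) = det (vandermonde_mat n x * newton_mat n x)"
    by (simp add: det_mult[OF V N])
  also have "\<dots> = (\<Prod>i<n. (vandermonde_mat n x * newton_mat n x) $$ (i,i))"
    unfolding VN by (rule det_lower_triangular_prod) (auto simp: newton_poly_def poly_prod intro!: prod_zero)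
  also have "\<dots> = (\<Prod>m<n. \<Prod>l<m. x m - x l)"
    unfolding VN by (auto simp: newton_poly_def poly_prod intro!: prod.cong)
  finally show ?thesis .
qed

lemma det_vandermonde_mult_cofactor_mat:
  "det (vandermonde_mat n x * cofactor_mat n x) = (\<Prod>k<n. \<Prod>l\<in>{..<n}-{k}. x k - x l)"
proof -
  have VJ: "vandermonde_mat n x * cofactor_mat n x = mat n n (\<lambda>(m,k). poly (cofactor_poly n x k) (x m))"
    unfolding cofactor_mat_def by (rule vandermonde_mult_poly_mat) (rule degree_cofactor_poly_less)
  have "det (vandermonde_mat n x * cofactor_mat n x) = (\<Prod>i<n. (vandermonde_mat n x * cofactor_mat n x) $$ (i,i))"
    unfolding VJ by (rule det_upper_triangular_prod) (auto simp: cofactor_poly_def poly_prod intro!: prod_zero)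
  also have "\<dots> = (\<Prod>k<n. \<Prod>l\<in>{..<n}-{k}. x k - x l)"
    unfolding VJ by (auto simp: cofactor_poly_def poly_prod intro!: prod.cong)
  finally show ?thesis .
qed

lemma prod_diff_split:
  fixes x :: "nat \<Rightarrow> real"
  shows "(\<Prod>k<n. \<Prod>l\<in>{..<n}-{k}. x k - x l) = (\<Prod>m<n. \<Prod>l<m. x m - x l) * (\<Prod>k<n. \<Prod>l\<in>{k<..<n}. x k - x l)"
proof -
  have split: "(\<Prod>l\<in>{..<n}-{k}. x k - x l) = (\<Prod>l<k. x k - x l) * (\<Prod>l\<in>{k<..<n}. x k - x l)"
    if "k < n" for k
  proof -
    have split_set: "{..<n}-{k} = {..<k} \<union> {k<..<n}" using that by auto
    show ?thesis
      unfolding split_set by (rule prod.union_disjoint) auto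
  qed
  have "(\<Prod>k<n. \<Prod>l\<in>{..<n}-{k}. x k - x l) = (\<Prod>k<n. (\<Prod>l<k. x k - x l) * (\<Prod>l\<in>{k<..<n}. x k - x l))"
    by (rule prod.cong[OF refl]) (simp add: split)
  also have "\<dots> = (\<Prod>m<n. \<Prod>l<m. x m - x l) * (\<Prod>k<n. \<Prod>l\<in>{k<..<n}. x k - x l)"
    by (rule prod.distrib)
  finally show ?thesis .
qed

lemma root_discr_eq_square: "root_discr n x = (\<Prod>k<n. \<Prod>l\<in>{k<..<n}. x k - x l)^2"
proof -
  have "(\<Prod>k<n. \<Prod>l\<in>{k<..<n}. x k - x l)^2 = (\<Prod>k<n. \<Prod>l\<in>{k<..<n}. (x k - x l)^2)"
    by (simp add: prod_power_distrib)
  also have "\<dots> = (\<Prod>(k,l)\<in>Sigma {..<n} (\<lambda>k. {k<..<n}). (x k - x l)^2)"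
    by (rule prod.Sigma) auto
  also have "Sigma {..<n} (\<lambda>k. {k<..<n}) = ordered_pairs n"
    by (auto simp: ordered_pairs_def)
  finally show ?thesis by (simp add: root_discr_def case_prod_beta)
qed

lemma det_cofactor_mat_sq: "det (cofactor_mat n x) ^ 2 = root_discr n x"
proof (cases "inj_on x {..<n}")
  case False
  then show ?thesis
    using det_cofactor_mat_not_inj root_discr_eq_0_iff by simp
next
  case True
  define V where "V = (\<Prod>m<n. \<Prod>l<m. x m - x l)"
  define U where "U = (\<Prod>k<n. \<Prod>l\<in>{k<..<n}. x k - x l)"
  have W: "vandermonde_mat n x \<in> carrier_mat n n"
    by (simp add: vandermonde_mat_def)
  have "V \<noteq> 0"
    unfolding V_def using True
    by (auto simp: inj_on_def) (metis lessThan_iff order.strict_trans less_irrefl)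
  moreover have "V * det (cofactor_mat n x) = V * U"
    using det_vandermonde_mult_cofactor_mat[of n x] det_mult[OF W cofactor_mat_carrier]
    unfolding prod_diff_split det_vandermonde_mat V_def U_def by simp
  ultimately have "det (cofactor_mat n x) = U"
    by simp
  then show ?thesis
    by (simp add: root_discr_eq_square U_def)
qed

lemma det_gram_rootpoly_eq_root_discr: "detn n (\<lambda>i j. gram_poly i j (rootpoly n x)) = root_discr n x"
  by (simp add: det_gram_rootpoly det_cofactor_mat_sq)

lemma coeff_poly_of: "coeff (poly_of n b) m = (if m = n then 1 else if m < n then b m else 0)"
  unfolding poly_of_def by (auto simp: coeff_sum coeff_monom)

lemma degree_poly_of: "degree (poly_of n b) = n"
proof (rule antisym)
  show "degree (poly_of n b) \<le> n" by (rule degree_le) (auto simp: coeff_poly_of)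
  show "n \<le> degree (poly_of n b)" by (rule le_degree) (simp add: coeff_poly_of)
qed

lemma poly_of_cong: "(\<And>m. m < n \<Longrightarrow> b m = b' m) \<Longrightarrow> poly_of n b = poly_of n b'"
  by (rule poly_eqI) (simp add: coeff_poly_of)

lemma poly_of_coeffun: "poly_of n (\<lambda>i. coeffun n i x) = rootpoly n x"
  by (rule poly_eqI)
     (use coeff_rootpoly_degree[of n x] coeff_eq_0[of "rootpoly n x"] degree_rootpoly[of n x]
       in \<open>auto simp: coeff_poly_of coeffun_def\<close>)

lemma coeffun_eq_coeff_vector: "poly_of n a = rootpoly n x \<Longrightarrow> m < n \<Longrightarrow> coeffun n m x = a m"
  unfolding coeffun_def by (metis coeff_poly_of less_not_refl)

definition real_rooted :: "nat \<Rightarrow> (nat \<Rightarrow> real) \<Rightarrow> bool" where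
  "real_rooted n b \<longleftrightarrow> (\<exists>x. poly_of n b = rootpoly n x)"

lemma poly_of_rootvec: "real_rooted n b \<Longrightarrow> poly_of n b = rootpoly n (rootvec n b)"
  unfolding real_rooted_def rootvec_def using someI_ex[of "\<lambda>x. poly_of n b = rootpoly n x"] by blast

lemma real_rooted_if_Dset: "a \<in> Dset n \<Longrightarrow> real_rooted n a"
  unfolding Dset_def real_rooted_def by auto

lemma discr_eq_root_discr: "discr n b = root_discr n (rootvec n b)"
  unfolding discr_def root_discr_def ordered_pairs_def Let_def ..

lemma discr_eq_det_gram_poly: "real_rooted n b \<Longrightarrow> discr n b = detn n (\<lambda>i j. gram_poly i j (poly_of n b))"
  by (simp add: poly_of_rootvec discr_eq_root_discr det_gram_rootpoly_eq_root_discr)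

lemma Gmat_eq_gram_poly: "real_rooted n b \<Longrightarrow> Gmat n i j b = gram_poly i j (poly_of n b)"
  by (simp add: poly_of_rootvec Gmat_def gram_poly_rootpoly GammaE_coeffun)

lemma Gmat_eq_sum_cofactor_poly:
  assumes "poly_of n a = rootpoly n x"
  shows "Gmat n i j a = (\<Sum>k<n. coeff (cofactor_poly n x k) i * coeff (cofactor_poly n x k) j)"
proof -
  have "real_rooted n a"
    using assms unfolding real_rooted_def by blast
  then show ?thesis
    using assms by (simp add: Gmat_eq_gram_poly gram_poly_rootpoly)
qed

lemma discr_coeffun: "discr n (\<lambda>i. coeffun n i x) = root_discr n x"
proof -
  have "real_rooted n (\<lambda>i. coeffun n i x)"
    unfolding real_rooted_def using poly_of_coeffun by blast
  then show ?thesis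
    by (simp add: discr_eq_det_gram_poly poly_of_coeffun det_gram_rootpoly_eq_root_discr)
qed

lemma inj_on_roots_if_Dset:
  assumes "a \<in> Dset n" and "poly_of n a = rootpoly n x"
  shows "inj_on x {..<n}"
proof -
  obtain x0 where "inj_on x0 {..<n}" "poly_of n a = rootpoly n x0"
    using assms(1) unfolding Dset_def by auto
  moreover have "root_discr n x = root_discr n x0"
    using assms(2) \<open>poly_of n a = rootpoly n x0\<close> det_gram_rootpoly_eq_root_discr by metis
  ultimately show ?thesis
    using root_discr_pos root_discr_eq_0_iff[of n x] by fastforce
qed

subsection \<open>Simple roots survive perturbation of one coefficient\<close>

lemma prod_linear_factors_dvd:
  assumes "finite S" "inj_on y S" "\<forall>k\<in>S. poly p (y k) = (0::real)"
  shows "(\<Prod>k\<in>S. [:- y k, 1:]) dvd p"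
  using assms
proof (induction S arbitrary: p rule: finite_induct)
  case empty
  then show ?case by simp
next
  case (insert k S)
  have "[:- y k, 1:] dvd p"
    using insert.prems by (simp add: dvd_iff_poly_eq_0)
  then obtain q where q: "p = [:- y k, 1:] * q"
    by (auto elim: dvdE)
  have "poly q (y l) = 0" if "l \<in> S" for l
  proof -
    have "y l \<noteq> y k" using insert.prems(1) insert.hyps(2) that by (auto simp: inj_on_def)
    moreover have "poly p (y l) = 0" using insert.prems that by auto
    ultimately show ?thesis by (simp add: q)
  qed
  then have "(\<Prod>k\<in>S. [:- y k, 1:]) dvd q"
    using insert.IH insert.prems(1) by (auto simp: inj_on_def)
  then show ?case
    unfolding q prod.insert[OF insert.hyps] by (rule mult_dvd_mono[OF dvd_refl])
qed

lemma monic_eq_rootpoly: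
  assumes "degree p = n" "coeff p n = 1" "inj_on y {..<n}" "\<forall>k<n. poly p (y k) = (0::real)"
  shows "p = rootpoly n y"
proof -
  have "rootpoly n y dvd p"
    unfolding rootpoly_def using prod_linear_factors_dvd[of "{..<n}" y p] assms by auto
  then obtain r where r: "p = rootpoly n y * r"
    by (auto elim: dvdE)
  have "r \<noteq> 0" "rootpoly n y \<noteq> 0"
    using r assms(2) by auto
  then have "degree p = n + degree r"
    using r degree_mult_eq degree_rootpoly by metis
  then have "degree r = 0"
    using assms(1) by simp
  moreover have "lead_coeff p = lead_coeff (rootpoly n y) * lead_coeff r"
    using r lead_coeff_mult by blast
  ultimately have "coeff r 0 = 1"
    using assms(1,2) degree_rootpoly[of n y] coeff_rootpoly_degree[of n y] by simp
  with \<open>degree r = 0\<close> have "r = 1"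
    by (metis degree_0_id one_pCons)
  then show ?thesis using r by simp
qed

lemma distinct_points_separated:
  fixes x :: "nat \<Rightarrow> real"
  assumes "inj_on x {..<n}"
  obtains d where "d > 0" "\<And>k l. k < n \<Longrightarrow> l < n \<Longrightarrow> k \<noteq> l \<Longrightarrow> 2 * d \<le> \<bar>x k - x l\<bar>"
proof -
  define S where "S = (\<lambda>(k,l). \<bar>x k - x l\<bar>) ` {(k,l). k < n \<and> l < n \<and> k \<noteq> l}"
  have "finite S"
    unfolding S_def by (rule finite_imageI, rule finite_subset[of _ "{..<n} \<times> {..<n}"]) auto
  have S_pos: "\<forall>z\<in>S. z > 0"
    using assms unfolding S_def inj_on_def by auto
  have in_S: "\<bar>x k - x l\<bar> \<in> S" if "k < n" "l < n" "k \<noteq> l" for k l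
    unfolding S_def by (rule image_eqI[where x="(k,l)"]) (use that in auto)
  show ?thesis
  proof (rule that)
    show "(if S = {} then 1 else Min S / 2) > 0"
      using \<open>finite S\<close> S_pos by auto
    show "2 * (if S = {} then 1 else Min S / 2) \<le> \<bar>x k - x l\<bar>" if "k < n" "l < n" "k \<noteq> l" for k l
      using in_S[OF that] \<open>finite S\<close> by auto
  qed
qed

lemma rootpoly_sign_change:
  assumes "d > 0" "\<And>l. l < n \<Longrightarrow> l \<noteq> k \<Longrightarrow> 2 * d \<le> \<bar>x k - x l\<bar>" and k: "k < n"
  shows "poly (rootpoly n x) (x k - d) * poly (rootpoly n x) (x k + d) < 0"
proof -
  have "poly [:- x l, 1:] (x k - d) * poly [:- x l, 1:] (x k + d) > 0" if "l \<in> {..<n}-{k}" for l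
  proof -
    have "d * d < \<bar>x k - x l\<bar> * \<bar>x k - x l\<bar>"
      using assms(1) assms(2)[of l] that by (intro mult_strict_mono) auto
    then show ?thesis by (simp add: abs_mult_self_eq algebra_simps)
  qed
  then have "poly (cofactor_poly n x k) (x k - d) * poly (cofactor_poly n x k) (x k + d) > 0"
    unfolding cofactor_poly_def poly_prod prod.distrib[symmetric] by (rule prod_pos)
  moreover have "poly (rootpoly n x) (x k - d) * poly (rootpoly n x) (x k + d)
      = - (d * d) * (poly (cofactor_poly n x k) (x k - d) * poly (cofactor_poly n x k) (x k + d))"
    by (simp add: rootpoly_eq_factor_cofactor_poly[OF k] algebra_simps)
  ultimately show ?thesis
    using assms(1) by (simp add: mult_neg_pos)
qed

lemma real_rooted_if_sign_changes:
  assumes "d > 0" "\<And>k l. k < n \<Longrightarrow> l < n \<Longrightarrow> k \<noteq> l \<Longrightarrow> 2 * d \<le> \<bar>x k - x l\<bar>"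
    and "\<And>k. k < n \<Longrightarrow> poly (poly_of n b) (x k - d) * poly (poly_of n b) (x k + d) < 0"
  shows "real_rooted n b"
proof -
  have "\<forall>k\<in>{..<n}. \<exists>r. x k - d < r \<and> r < x k + d \<and> poly (poly_of n b) r = 0"
  proof
    fix k assume "k \<in> {..<n}"
    then show "\<exists>r. x k - d < r \<and> r < x k + d \<and> poly (poly_of n b) r = 0"
      using poly_IVT[of "x k - d" "x k + d" "poly_of n b"] assms(1,3) by auto
  qed
  from bchoice[OF this]
  obtain y where "\<forall>k\<in>{..<n}. x k - d < y k \<and> y k < x k + d \<and> poly (poly_of n b) (y k) = 0"
    by blast
  then have y: "\<And>k. k < n \<Longrightarrow> x k - d < y k \<and> y k < x k + d \<and> poly (poly_of n b) (y k) = 0"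
    by blast
  have "inj_on y {..<n}"
  proof (rule inj_onI, rule ccontr)
    fix k l assume "k \<in> {..<n}" "l \<in> {..<n}" "y k = y l" "k \<noteq> l"
    then show False
      using assms(2)[of k l] y[of k] y[of l] by (auto simp: abs_less_iff)
  qed
  then have "poly_of n b = rootpoly n y"
    by (intro monic_eq_rootpoly) (use y in \<open>auto simp: degree_poly_of coeff_poly_of\<close>)
  then show ?thesis
    unfolding real_rooted_def by blast
qed

lemma poly_poly_of_fun_upd:
  assumes "j < n"
  shows "poly (poly_of n (a(j := s))) z = poly (poly_of n a) z + (s - a j) * z ^ j"
proof -
  have "poly_of n (a(j := s)) = poly_of n a + monom (s - a j) j"
    using assms by (intro poly_eqI) (auto simp: coeff_poly_of coeff_monom)
  then show ?thesis by (simp add: poly_monom)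
qed

lemma eventually_real_rooted:
  assumes a: "a \<in> Dset n" and j: "j < n"
  shows "\<forall>\<^sub>F s in nhds (a j). real_rooted n (a(j := s))"
proof -
  obtain x where x: "inj_on x {..<n}" "poly_of n a = rootpoly n x"
    using a unfolding Dset_def by auto
  obtain d where d: "d > 0" "\<And>k l. k < n \<Longrightarrow> l < n \<Longrightarrow> k \<noteq> l \<Longrightarrow> 2 * d \<le> \<bar>x k - x l\<bar>"
    using distinct_points_separated[OF x(1)] by blast
  have "\<forall>\<^sub>F s in nhds (a j). poly (poly_of n (a(j := s))) (x k - d) * poly (poly_of n (a(j := s))) (x k + d) < 0"
    if k: "k < n" for k
  proof -
    define g where "g s = poly (poly_of n (a(j := s))) (x k - d) * poly (poly_of n (a(j := s))) (x k + d)" for s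
    have "g = (\<lambda>s. (poly (poly_of n a) (x k - d) + (s - a j) * (x k - d) ^ j)
                  * (poly (poly_of n a) (x k + d) + (s - a j) * (x k + d) ^ j))"
      unfolding g_def poly_poly_of_fun_upd[OF j] ..
    then have "isCont g (a j)"
      by (simp add: continuous_intros)
    moreover have "g (a j) < 0"
      unfolding g_def x(2) fun_upd_triv by (rule rootpoly_sign_change[OF d(1) _ k]) (use d(2) k in auto)
    ultimately have "\<forall>\<^sub>F s in nhds (a j). g s < 0"
      by (intro order_tendstoD(2)) (simp_all add: isCont_def tendsto_at_iff_tendsto_nhds)
    then show ?thesis
      unfolding g_def .
  qed
  then have "\<forall>\<^sub>F s in nhds (a j). \<forall>k\<in>{..<n}.
      poly (poly_of n (a(j := s))) (x k - d) * poly (poly_of n (a(j := s))) (x k + d) < 0"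
    by (simp add: eventually_ball_finite)
  then show ?thesis
    by (rule eventually_mono) (auto intro: real_rooted_if_sign_changes[OF d])
qed

text \<open>The space \<open>nat \<Rightarrow> real\<close> is not normed, so Frechet derivatives are unavailable; this
  Gateaux-type condition, with a derivative linear in the first \<open>n\<close> coordinates of the
  direction, is all the chain rule below needs.\<close>

definition line_differentiable :: "nat \<Rightarrow> ((nat \<Rightarrow> real) \<Rightarrow> real) \<Rightarrow> (nat \<Rightarrow> real) \<Rightarrow> bool" where
  "line_differentiable n f b \<longleftrightarrow>
     (\<exists>g. \<forall>v. ((\<lambda>s. f (\<lambda>i. b i + s * v i)) has_real_derivative (\<Sum>j<n. v j * g j)) (at 0))"

lemma line_differentiable_const: "line_differentiable n (\<lambda>_. c) b"
  unfolding line_differentiable_def by (rule exI[of _ "\<lambda>_. 0"]) auto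

lemma line_differentiable_coordinate:
  assumes "m < n"
  shows "line_differentiable n (\<lambda>b. b m) b"
  unfolding line_differentiable_def
proof (intro exI[of _ "\<lambda>j. if j = m then 1 else 0"] allI)
  fix v :: "nat \<Rightarrow> real"
  have "((\<lambda>s. b m + s * v m) has_real_derivative v m) (at 0)"
    by (auto intro!: derivative_eq_intros)
  moreover have "(\<Sum>j<n. v j * (if j = m then 1 else 0)) = v m"
    using assms by (simp add: if_distrib cong: if_cong)
  ultimately show "((\<lambda>s. b m + s * v m) has_real_derivative (\<Sum>j<n. v j * (if j = m then 1 else 0))) (at 0)"
    by simp
qed

lemma line_differentiable_add:
  assumes "line_differentiable n f b" "line_differentiable n h b"
  shows "line_differentiable n (\<lambda>b. f b + h b) b"
proof -
  obtain g1 where g1: "\<And>v. ((\<lambda>s. f (\<lambda>i. b i + s * v i)) has_real_derivative (\<Sum>j<n. v j * g1 j)) (at 0)"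
    using assms(1) unfolding line_differentiable_def by blast
  obtain g2 where g2: "\<And>v. ((\<lambda>s. h (\<lambda>i. b i + s * v i)) has_real_derivative (\<Sum>j<n. v j * g2 j)) (at 0)"
    using assms(2) unfolding line_differentiable_def by blast
  show ?thesis
    unfolding line_differentiable_def
    using DERIV_add[OF g1 g2] by (intro exI[of _ "\<lambda>j. g1 j + g2 j"]) (simp add: distrib_left sum.distrib)
qed

lemma line_differentiable_mult:
  assumes "line_differentiable n f b" "line_differentiable n h b"
  shows "line_differentiable n (\<lambda>b. f b * h b) b"
proof -
  obtain g1 where g1: "\<And>v. ((\<lambda>s. f (\<lambda>i. b i + s * v i)) has_real_derivative (\<Sum>j<n. v j * g1 j)) (at 0)"
    using assms(1) unfolding line_differentiable_def by blast
  obtain g2 where g2: "\<And>v. ((\<lambda>s. h (\<lambda>i. b i + s * v i)) has_real_derivative (\<Sum>j<n. v j * g2 j)) (at 0)"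
    using assms(2) unfolding line_differentiable_def by blast
  show ?thesis
    unfolding line_differentiable_def
    using DERIV_mult[OF g1 g2]
    by (intro exI[of _ "\<lambda>j. g1 j * h b + g2 j * f b"])
       (simp add: distrib_left sum.distrib sum_distrib_right mult.assoc)
qed

lemma line_differentiable_diff:
  "line_differentiable n f b \<Longrightarrow> line_differentiable n h b \<Longrightarrow> line_differentiable n (\<lambda>b. f b - h b) b"
  using line_differentiable_add[of n f b "\<lambda>b. (-1) * h b"]
    line_differentiable_mult[of n "\<lambda>_. -1" b h] line_differentiable_const[of n "-1" b]
  by simp

lemma line_differentiable_sum:
  "finite A \<Longrightarrow> (\<And>a. a \<in> A \<Longrightarrow> line_differentiable n (f a) b) \<Longrightarrow> line_differentiable n (\<lambda>b. \<Sum>a\<in>A. f a b) b"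
  by (induction A rule: finite_induct) (auto intro!: line_differentiable_add line_differentiable_const)

lemma line_differentiable_prod:
  "finite A \<Longrightarrow> (\<And>a. a \<in> A \<Longrightarrow> line_differentiable n (f a) b) \<Longrightarrow> line_differentiable n (\<lambda>b. \<Prod>a\<in>A. f a b) b"
  by (induction A rule: finite_induct) (auto intro!: line_differentiable_mult line_differentiable_const)

lemma line_differentiable_ln:
  assumes "line_differentiable n f b" "f b > 0"
  shows "line_differentiable n (\<lambda>b. ln (f b)) b"
proof -
  obtain g where g: "\<And>v. ((\<lambda>s. f (\<lambda>i. b i + s * v i)) has_real_derivative (\<Sum>j<n. v j * g j)) (at 0)"
    using assms(1) unfolding line_differentiable_def by blast
  have "((\<lambda>s. ln (f (\<lambda>i. b i + s * v i))) has_real_derivative (\<Sum>j<n. v j * (g j / f b))) (at 0)" for v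
    using DERIV_chain2[OF DERIV_ln g[of v]] assms(2)
    by (simp add: sum_distrib_left divide_inverse mult_ac)
  then show ?thesis
    unfolding line_differentiable_def by (intro exI[of _ "\<lambda>j. g j / f b"] allI)
qed

lemma line_differentiable_partial:
  assumes "line_differentiable n f b"
  shows "((\<lambda>s. f (\<lambda>i. b i + s * v i)) has_real_derivative (\<Sum>j<n. v j * partial j f b)) (at 0)"
proof -
  obtain g where g: "\<And>v. ((\<lambda>s. f (\<lambda>i. b i + s * v i)) has_real_derivative (\<Sum>j<n. v j * g j)) (at 0)"
    using assms unfolding line_differentiable_def by blast
  have "partial j f b = g j" if j: "j < n" for j
  proof -
    define F where "F s = f (\<lambda>i. b i + s * (if i = j then 1 else 0))" for s
    have "(\<Sum>l<n. (if l = j then 1 else 0) * g l) = (\<Sum>l<n. if l = j then g j else 0)"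
      by (rule sum.cong) auto
    then have "(F has_real_derivative g j) (at (b j - b j))"
      using g[of "\<lambda>i. if i = j then 1 else 0"] j unfolding F_def by simp
    then have "((\<lambda>t. F (t - b j)) has_real_derivative g j * 1) (at (b j))"
      by (rule DERIV_chain2) (auto intro!: derivative_eq_intros)
    moreover have "(\<lambda>t. f (b(j := t))) = (\<lambda>t. F (t - b j))"
      unfolding F_def by (auto intro!: ext arg_cong[where f=f])
    ultimately show ?thesis
      unfolding partial_def by (simp add: DERIV_imp_deriv)
  qed
  then show ?thesis
    using g[of v] by simp
qed

lemma line_differentiable_chain:
  assumes "line_differentiable n f b"
  shows "((\<lambda>t. f (\<lambda>i. b i + (t - t0) * v i)) has_real_derivative (\<Sum>j<n. v j * partial j f b)) (at t0)"
proof -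
  have D: "((\<lambda>s. f (\<lambda>i. b i + s * v i)) has_real_derivative (\<Sum>j<n. v j * partial j f b)) (at (t0 - t0))"
    using line_differentiable_partial[OF assms] by simp
  have L: "((\<lambda>t. t - t0) has_real_derivative 1) (at t0)"
    by (auto intro!: derivative_eq_intros)
  show ?thesis
    using DERIV_chain2[where f="\<lambda>s. f (\<lambda>i. b i + s * v i)" and g="\<lambda>t. t - t0" and x=t0, OF D L] by simp
qed

lemma line_differentiable_coeff_poly_of: "line_differentiable n (\<lambda>b. coeff (poly_of n b) m) b"
proof (cases "m < n")
  case True
  then show ?thesis
    using line_differentiable_coordinate[OF True] by (simp add: coeff_poly_of)
next
  case False
  then have "(\<lambda>b. coeff (poly_of n b) m) = (\<lambda>_. if m = n then 1 else 0)"
    by (auto simp: coeff_poly_of)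
  then show ?thesis
    using line_differentiable_const by simp
qed

lemma gram_poly_altdef:
  "gram_poly i j P = (\<Sum>t\<le>i. of_nat (Suc (i-t)) * coeff P (Suc (i-t)) * coeff P (j+1+t)
     - coeff P (i-t) * (of_nat (Suc (j+1+t)) * coeff P (Suc (j+1+t))))"
  unfolding gram_poly_def coeff_pderiv by simp

lemma line_differentiable_det_gram_poly:
  "line_differentiable n (\<lambda>b. detn n (\<lambda>i j. gram_poly i j (poly_of n b))) b"
  unfolding detn_def gram_poly_altdef
  by (intro line_differentiable_sum line_differentiable_mult line_differentiable_const line_differentiable_prod
      line_differentiable_diff line_differentiable_coeff_poly_of) (auto simp: finite_permutations)

subsection \<open>Derivatives of the Gram matrix in the coefficients\<close>

text \<open>In every product of two coefficients in \<open>gram_poly i j\<close> at most one index equals \<open>j\<close>,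
  so \<open>gram_poly i j\<close> is affine in \<open>a\<^sub>j\<close>; this is its slope.\<close>

definition gram_poly_deriv :: "nat \<Rightarrow> nat \<Rightarrow> real poly \<Rightarrow> real" where
  "gram_poly_deriv i j P =
     (\<Sum>t\<le>i. (if Suc (i-t) = j then of_nat (Suc (i-t)) * coeff P (j+1+t) else 0)
           - (if i - t = j then of_nat (Suc (j+1+t)) * coeff P (Suc (j+1+t)) else 0))"

lemma gram_poly_poly_of_fun_upd:
  assumes "j < n"
  shows "gram_poly i j (poly_of n (a(j := s)))
       = (gram_poly i j (poly_of n a) - a j * gram_poly_deriv i j (poly_of n a)) + s * gram_poly_deriv i j (poly_of n a)"
proof -
  let ?c = "coeff (poly_of n a)"
  have coeff_upd: "coeff (poly_of n (a(j := s))) m = ?c m + (if m = j then s - a j else 0)" for m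
    using assms by (auto simp: coeff_poly_of)
  have "gram_poly i j (poly_of n (a(j := s)))
      = (\<Sum>t\<le>i. (of_nat (Suc (i-t)) * ?c (Suc (i-t)) * ?c (j+1+t) - ?c (i-t) * (of_nat (Suc (j+1+t)) * ?c (Suc (j+1+t))))
          + (s - a j) * ((if Suc (i-t) = j then of_nat (Suc (i-t)) * ?c (j+1+t) else 0)
                       - (if i - t = j then of_nat (Suc (j+1+t)) * ?c (Suc (j+1+t)) else 0)))"
    unfolding gram_poly_altdef by (rule sum.cong[OF refl]) (auto simp: coeff_upd algebra_simps)
  also have "\<dots> = gram_poly i j (poly_of n a) + (s - a j) * gram_poly_deriv i j (poly_of n a)"
    unfolding gram_poly_altdef gram_poly_deriv_def by (simp add: sum.distrib sum_distrib_left)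
  finally show ?thesis
    by (simp add: algebra_simps)
qed

lemma partial_gram_poly_poly_of:
  "j < n \<Longrightarrow> partial j (\<lambda>b. gram_poly i j (poly_of n b)) a = gram_poly_deriv i j (poly_of n a)"
  by (rule partial_affine, rule gram_poly_poly_of_fun_upd)

lemma sum_reversed_Suc: "(\<Sum>t\<le>i. real (Suc (i - t))) = real (Suc i) * (real (Suc i) + 1) / 2"
proof -
  have "(\<Sum>t\<le>i. real (Suc (i - t))) = (\<Sum>t<Suc i. real (Suc (Suc i - Suc t)))"
    by (simp add: lessThan_Suc_atMost)
  also have "\<dots> = (\<Sum>t<Suc i. real (Suc t))"
    by (rule sum.nat_diff_reindex)
  also have "\<dots> = real (Suc i) * (real (Suc i) + 1) / 2"
    by (induct i) (auto simp: field_simps)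
  finally show ?thesis .
qed

lemma sum_gram_poly_deriv_summand:
  fixes c :: "nat \<Rightarrow> real"
  assumes "t \<le> i" "i < n"
  shows "(\<Sum>j<n. (if Suc (i-t) = j then of_nat (Suc (i-t)) * c (j+1+t) else 0)
                - (if i - t = j then of_nat (Suc (j+1+t)) * c (Suc (j+1+t)) else 0))
       = (if Suc (i-t) < n then of_nat (Suc (i-t)) * c (Suc (Suc i)) else 0) - of_nat (Suc (Suc i)) * c (Suc (Suc i))"
proof -
  have "Suc (i-t) + 1 + t = Suc (Suc i)" "Suc (i - t + 1 + t) = Suc (Suc i)" "i - t < n"
    using assms by auto
  then show ?thesis
    unfolding sum_subtractf by (simp add: eq_commute[of "Suc (i-t)"] eq_commute[of "i-t"])
qed

lemma sum_gram_poly_deriv: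
  assumes i: "i < n"
  shows "2 * (\<Sum>j<n. gram_poly_deriv i j (poly_of n a)) = - coeff (pderiv (pderiv (poly_of n a))) i"
proof -
  let ?c = "coeff (poly_of n a) (Suc (Suc i))"
  have "(\<Sum>j<n. gram_poly_deriv i j (poly_of n a))
      = (\<Sum>t\<le>i. (if Suc (i-t) < n then of_nat (Suc (i-t)) * ?c else 0) - of_nat (Suc (Suc i)) * ?c)"
    unfolding gram_poly_deriv_def
    by (subst sum.swap, rule sum.cong[OF refl], rule sum_gram_poly_deriv_summand) (use i in auto)
  also have "\<dots> = - (real (Suc i) * (real (Suc i) + 1) / 2) * ?c"
  proof (cases "?c = 0")
    case True
    then show ?thesis by (auto intro!: sum.neutral)
  next
    case False
    then have "Suc (Suc i) \<le> n"
      by (auto simp: coeff_poly_of split: if_splits)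
    then have "(\<Sum>t\<le>i. (if Suc (i-t) < n then of_nat (Suc (i-t)) * ?c else 0) - of_nat (Suc (Suc i)) * ?c)
        = (\<Sum>t\<le>i. real (Suc (i-t)) * ?c - real (Suc (Suc i)) * ?c)"
      by (intro sum.cong) auto
    also have "\<dots> = (\<Sum>t\<le>i. real (Suc (i-t))) * ?c - real (Suc i) * (real (Suc (Suc i)) * ?c)"
      by (simp only: sum_subtractf sum_distrib_right[symmetric] sum_constant card_atMost of_nat_id)
    also have "\<dots> = - (real (Suc i) * (real (Suc i) + 1) / 2) * ?c"
      unfolding sum_reversed_Suc by (simp add: field_simps)
    finally show ?thesis .
  qed
  finally show ?thesis
    by (simp add: coeff_pderiv field_simps)
qed

subsection \<open>The logarithmic derivative of the discriminant in the roots\<close>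

definition cofactor_poly2 :: "nat \<Rightarrow> (nat \<Rightarrow> real) \<Rightarrow> nat \<Rightarrow> nat \<Rightarrow> real poly" where
  "cofactor_poly2 n x k l = (\<Prod>m\<in>{..<n}-{k}-{l}. [:- x m, 1:])"

lemma cofactor_poly2_commute: "cofactor_poly2 n x k l = cofactor_poly2 n x l k"
  unfolding cofactor_poly2_def by (rule arg_cong[where f="prod _"]) auto

lemma cofactor_poly_eq_factor_cofactor_poly2:
  "k < n \<Longrightarrow> l < n \<Longrightarrow> k \<noteq> l \<Longrightarrow> cofactor_poly n x k = [:- x l, 1:] * cofactor_poly2 n x k l"
  unfolding cofactor_poly_def cofactor_poly2_def by (subst prod.remove[of _ l]) auto

lemma cofactor_poly_diff:
  assumes "k < n" "l < n" "k \<noteq> l"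
  shows "cofactor_poly n x k - cofactor_poly n x l = Polynomial.smult (x k - x l) (cofactor_poly2 n x k l)"
proof -
  have "cofactor_poly n x k = [:- x l, 1:] * cofactor_poly2 n x k l"
    "cofactor_poly n x l = [:- x k, 1:] * cofactor_poly2 n x k l"
    using assms cofactor_poly_eq_factor_cofactor_poly2[of _ n _ x] cofactor_poly2_commute by auto
  then have "cofactor_poly n x k - cofactor_poly n x l = ([:- x l, 1:] - [:- x k, 1:]) * cofactor_poly2 n x k l"
    by (simp only: left_diff_distrib)
  also have "[:- x l, 1:] - [:- x k, 1:] = [:x k - x l:]"
    by simp
  finally show ?thesis
    by simp
qed

lemma pderiv_cofactor_poly: "pderiv (cofactor_poly n x k) = (\<Sum>l\<in>{..<n}-{k}. cofactor_poly2 n x k l)"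
  unfolding cofactor_poly_def cofactor_poly2_def pderiv_prod by (rule sum.cong) (auto simp: pderiv_pCons)

lemma pderiv_sum: "pderiv (sum f A) = (\<Sum>a\<in>A. pderiv (f a))"
  using higher_pderiv_sum[of 1 f A] by simp

lemma pderiv_pderiv_rootpoly:
  "pderiv (pderiv (rootpoly n x)) = (\<Sum>p\<in>ordered_pairs n. Polynomial.smult 2 (cofactor_poly2 n x (fst p) (snd p)))"
proof -
  let ?swap = "\<lambda>(i,j). (j,i)"
  have "pderiv (pderiv (rootpoly n x)) = (\<Sum>(k,l)\<in>Sigma {..<n} (\<lambda>k. {..<n}-{k}). cofactor_poly2 n x k l)"
    by (simp add: pderiv_rootpoly pderiv_sum pderiv_cofactor_poly sum.Sigma)
  also have "Sigma {..<n} (\<lambda>k. {..<n}-{k}) = ordered_pairs n \<union> ?swap ` ordered_pairs n"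
    by (auto simp: ordered_pairs_def image_iff)
  also have "(\<Sum>(k,l)\<in>ordered_pairs n \<union> ?swap ` ordered_pairs n. cofactor_poly2 n x k l)
      = (\<Sum>(k,l)\<in>ordered_pairs n. cofactor_poly2 n x k l) + (\<Sum>(k,l)\<in>?swap ` ordered_pairs n. cofactor_poly2 n x k l)"
    by (rule sum.union_disjoint) (simp_all, auto simp: ordered_pairs_def)
  also have "(\<Sum>(k,l)\<in>?swap ` ordered_pairs n. cofactor_poly2 n x k l) = (\<Sum>(k,l)\<in>ordered_pairs n. cofactor_poly2 n x k l)"
    by (subst sum.reindex) (auto simp: inj_on_def cofactor_poly2_commute intro!: sum.cong)
  finally show ?thesis
    by (simp add: case_prod_beta sum_distrib_left numeral_mult_conv_smult)
qed

text \<open>This is \<open>\<Sum>_(l\<noteq>k) 2/(x_k - x_l)\<close>, written as a sum over the pairs indexing \<open>root_discr\<close>.\<close>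

definition dlog_root_discr :: "nat \<Rightarrow> (nat \<Rightarrow> real) \<Rightarrow> nat \<Rightarrow> real" where
  "dlog_root_discr n x k =
     (\<Sum>p\<in>ordered_pairs n. 2 * ((if fst p = k then 1 else 0) - (if snd p = k then 1 else 0)) / (x (fst p) - x (snd p)))"

lemma ordered_pairs_distinct_values:
  assumes "inj_on x {..<n}" "p \<in> ordered_pairs n"
  shows "x (fst p) \<noteq> x (snd p)"
proof
  assume "x (fst p) = x (snd p)"
  moreover have "fst p < n" "snd p < n" "fst p \<noteq> snd p"
    using assms(2) by (auto simp: ordered_pairs_def)
  ultimately show False
    using inj_onD[OF assms(1)] by auto
qed

lemma has_real_derivative_ln_sq_diff:
  assumes "x i \<noteq> x j"
  shows "((\<lambda>t. ln (((x(k := t)) i - (x(k := t)) j)^2)) has_real_derivative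
           2 * ((if i = k then 1 else 0) - (if j = k then 1 else 0)) / (x i - x j)) (at (x k))"
proof -
  define D :: real where "D = (if i = k then 1 else 0) - (if j = k then 1 else 0)"
  define u where "u t = (if i = k then t else x i) - (if j = k then t else x j)" for t
  have u: "(u has_real_derivative D) (at (x k))"
    unfolding u_def D_def by (cases "i = k"; cases "j = k") (auto intro!: derivative_eq_intros)
  have ux: "u (x k) = x i - x j"
    unfolding u_def by auto
  have "((\<lambda>t. (u t)^2) has_real_derivative D * u (x k) + u (x k) * D) (at (x k))"
    using DERIV_mult[OF u u] by (simp add: power2_eq_square)
  moreover have "0 < (u (x k))^2"
    using assms ux by simp
  ultimately have "((\<lambda>t. ln ((u t)^2)) has_real_derivative inverse ((u (x k))^2) * (D * u (x k) + u (x k) * D)) (at (x k))"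
    by (intro DERIV_chain2[OF DERIV_ln])
  moreover have "inverse ((u (x k))^2) * (D * u (x k) + u (x k) * D) = 2 * D / (x i - x j)"
    using ux assms by (simp add: field_simps power2_eq_square)
  moreover have "(\<lambda>t. ln (((x(k := t)) i - (x(k := t)) j)^2)) = (\<lambda>t. ln ((u t)^2))"
    unfolding u_def by auto
  ultimately show ?thesis
    unfolding D_def by simp
qed

lemma has_real_derivative_ln_root_discr:
  assumes inj: "inj_on x {..<n}" and k: "k < n"
  shows "((\<lambda>t. ln (root_discr n (x(k := t)))) has_real_derivative dlog_root_discr n x k) (at (x k))"
proof -
  note distinct = ordered_pairs_distinct_values[OF inj]
  have "\<forall>\<^sub>F t in nhds (x k). \<forall>l\<in>{..<n}-{k}. t \<noteq> x l"
    using inj k by (intro eventually_ball_finite ballI t1_space_nhds) (auto simp: inj_on_def)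
  then have ln_sum: "\<forall>\<^sub>F t in nhds (x k). ln (root_discr n (x(k := t)))
      = (\<Sum>p\<in>ordered_pairs n. ln (((x(k := t)) (fst p) - (x(k := t)) (snd p))^2))"
  proof (rule eventually_mono)
    fix t assume t: "\<forall>l\<in>{..<n}-{k}. t \<noteq> x l"
    have "((x(k := t)) (fst p) - (x(k := t)) (snd p))^2 \<noteq> 0" if "p \<in> ordered_pairs n" for p
      using that t distinct[OF that] by (auto simp: ordered_pairs_def)
    then show "ln (root_discr n (x(k := t)))
        = (\<Sum>p\<in>ordered_pairs n. ln (((x(k := t)) (fst p) - (x(k := t)) (snd p))^2))"
      unfolding root_discr_def by (rule ln_prod[OF finite_ordered_pairs])
  qed
  have "((\<lambda>t. \<Sum>p\<in>ordered_pairs n. ln (((x(k := t)) (fst p) - (x(k := t)) (snd p))^2))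
      has_real_derivative dlog_root_discr n x k) (at (x k))"
    unfolding dlog_root_discr_def by (intro DERIV_sum has_real_derivative_ln_sq_diff distinct)
  then show ?thesis
    using DERIV_cong_ev[OF refl ln_sum refl] by simp
qed

lemma sum_pair_weights_cofactor_poly:
  assumes "i < j" "j < n" "x i \<noteq> x j"
  shows "(\<Sum>k<n. Polynomial.smult (2 * ((if i = k then 1 else 0) - (if j = k then 1 else 0)) / (x i - x j)) (cofactor_poly n x k))
       = Polynomial.smult 2 (cofactor_poly2 n x i j)"
proof -
  have "(\<Sum>k<n. Polynomial.smult (2 * ((if i = k then 1 else 0) - (if j = k then 1 else 0)) / (x i - x j)) (cofactor_poly n x k))
      = (\<Sum>k<n. (if k = i then Polynomial.smult (2 / (x i - x j)) (cofactor_poly n x k) else 0)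
             - (if k = j then Polynomial.smult (2 / (x i - x j)) (cofactor_poly n x k) else 0))"
    by (rule sum.cong) auto
  also have "\<dots> = Polynomial.smult (2 / (x i - x j)) (cofactor_poly n x i - cofactor_poly n x j)"
    using assms by (simp add: sum_subtractf Polynomial.smult_diff_right)
  also have "\<dots> = Polynomial.smult (2 / (x i - x j) * (x i - x j)) (cofactor_poly2 n x i j)"
    using assms by (simp only: cofactor_poly_diff Polynomial.smult_smult)
  also have "2 / (x i - x j) * (x i - x j) = 2"
    using assms by (simp add: field_simps)
  finally show ?thesis .
qed

lemma sum_dlog_root_discr_cofactor_poly:
  assumes inj: "inj_on x {..<n}"
  shows "(\<Sum>k<n. Polynomial.smult (dlog_root_discr n x k) (cofactor_poly n x k)) = pderiv (pderiv (rootpoly n x))"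
proof -
  have "(\<Sum>k<n. Polynomial.smult (dlog_root_discr n x k) (cofactor_poly n x k))
      = (\<Sum>p\<in>ordered_pairs n. \<Sum>k<n. Polynomial.smult (2 * ((if fst p = k then 1 else 0) - (if snd p = k then 1 else 0))
            / (x (fst p) - x (snd p))) (cofactor_poly n x k))"
    unfolding dlog_root_discr_def Polynomial.smult_sum by (rule sum.swap)
  also have "\<dots> = (\<Sum>p\<in>ordered_pairs n. Polynomial.smult 2 (cofactor_poly2 n x (fst p) (snd p)))"
    using ordered_pairs_distinct_values[OF inj]
    by (intro sum.cong refl sum_pair_weights_cofactor_poly) (auto simp: ordered_pairs_def)
  finally show ?thesis
    by (simp add: pderiv_pderiv_rootpoly)
qed

subsection \<open>Passing between roots and coefficients\<close>

definition ln_det_gram :: "nat \<Rightarrow> (nat \<Rightarrow> real) \<Rightarrow> real" where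
  "ln_det_gram n b = ln (detn n (\<lambda>i j. gram_poly i j (poly_of n b)))"

lemma partial_eq_on_real_rooted:
  assumes "a \<in> Dset n" "j < n" "\<And>b. real_rooted n b \<Longrightarrow> f b = g b"
  shows "partial j f a = partial j g a"
  unfolding partial_def
  by (rule deriv_cong_ev[OF eventually_mono[OF eventually_real_rooted[OF assms(1,2)]] refl]) (simp add: assms(3))

lemma partial_ln_discr:
  "a \<in> Dset n \<Longrightarrow> j < n \<Longrightarrow> partial j (\<lambda>b. ln (discr n b)) a = partial j (ln_det_gram n) a"
  unfolding ln_det_gram_def using discr_eq_det_gram_poly by (intro partial_eq_on_real_rooted) auto

lemma partial_Gmat:
  assumes "a \<in> Dset n" "j < n"
  shows "partial j (Gmat n i j) a = gram_poly_deriv i j (poly_of n a)"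
proof -
  have "partial j (Gmat n i j) a = partial j (\<lambda>b. gram_poly i j (poly_of n b)) a"
    using assms by (rule partial_eq_on_real_rooted) (rule Gmat_eq_gram_poly)
  also have "\<dots> = gram_poly_deriv i j (poly_of n a)"
    using assms(2) by (rule partial_gram_poly_poly_of)
  finally show ?thesis .
qed

lemma dlog_root_discr_eq_partial_ln_det_gram:
  assumes a: "a \<in> Dset n" and x: "poly_of n a = rootpoly n x" and k: "k < n"
  shows "dlog_root_discr n x k = - (\<Sum>j<n. coeff (cofactor_poly n x k) j * partial j (ln_det_gram n) a)"
proof -
  have inj: "inj_on x {..<n}"
    using inj_on_roots_if_Dset[OF a x] .
  define b where "b = (\<lambda>i. coeffun n i x)"
  define v where "v = (\<lambda>j. - coeff (cofactor_poly n x k) j)"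
  have "detn n (\<lambda>i j. gram_poly i j (poly_of n b)) > 0"
    unfolding b_def poly_of_coeffun det_gram_rootpoly_eq_root_discr using root_discr_pos[OF inj] .
  then have "line_differentiable n (ln_det_gram n) b"
    unfolding ln_det_gram_def by (rule line_differentiable_ln[OF line_differentiable_det_gram_poly])
  then have "((\<lambda>t. ln_det_gram n (\<lambda>i. b i + (t - x k) * v i)) has_real_derivative
      (\<Sum>j<n. v j * partial j (ln_det_gram n) b)) (at (x k))"
    by (rule line_differentiable_chain)
  moreover have "(\<lambda>i. b i + (t - x k) * v i) = (\<lambda>i. coeffun n i (x(k := t)))" for t
    using coeffun_fun_upd[OF k, of _ x] coeffun_fun_upd[OF k, of _ x "x k"]
    by (auto simp: b_def v_def algebra_simps)
  ultimately have "((\<lambda>t. ln (root_discr n (x(k := t)))) has_real_derivative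
      (\<Sum>j<n. v j * partial j (ln_det_gram n) b)) (at (x k))"
    by (simp add: ln_det_gram_def poly_of_coeffun det_gram_rootpoly_eq_root_discr)
  then have "dlog_root_discr n x k = (\<Sum>j<n. v j * partial j (ln_det_gram n) b)"
    using DERIV_unique[OF has_real_derivative_ln_root_discr[OF inj k]] by blast
  moreover have "partial j (ln_det_gram n) b = partial j (ln_det_gram n) a" if "j < n" for j
  proof -
    have "poly_of n (b(j := t)) = poly_of n (a(j := t))" for t
      by (rule poly_of_cong) (auto simp: b_def coeffun_eq_coeff_vector[OF x])
    then show ?thesis
      unfolding partial_def ln_det_gram_def using coeffun_eq_coeff_vector[OF x that] by (simp add: b_def)
  qed
  ultimately show ?thesis
    by (simp add: v_def sum_negf[symmetric])
qed

lemma sum_Gmat_partial_ln_discr: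
  assumes a: "a \<in> Dset n" and x: "poly_of n a = rootpoly n x" and i: "i < n"
  shows "(\<Sum>j<n. Gmat n i j a * partial j (\<lambda>b. ln (discr n b)) a) = - coeff (pderiv (pderiv (poly_of n a))) i"
proof -
  let ?Q = "cofactor_poly n x"
  have "(\<Sum>j<n. Gmat n i j a * partial j (\<lambda>b. ln (discr n b)) a)
      = (\<Sum>j<n. \<Sum>k<n. coeff (?Q k) i * (coeff (?Q k) j * partial j (ln_det_gram n) a))"
    by (rule sum.cong[OF refl])
       (simp add: Gmat_eq_sum_cofactor_poly[OF x] partial_ln_discr[OF a] sum_distrib_right mult.assoc)
  also have "\<dots> = (\<Sum>k<n. coeff (?Q k) i * (\<Sum>j<n. coeff (?Q k) j * partial j (ln_det_gram n) a))"
    by (subst sum.swap) (simp add: sum_distrib_left)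
  also have "\<dots> = (\<Sum>k<n. coeff (?Q k) i * (- dlog_root_discr n x k))"
    by (simp add: dlog_root_discr_eq_partial_ln_det_gram[OF a x])
  also have "\<dots> = - coeff (\<Sum>k<n. Polynomial.smult (dlog_root_discr n x k) (?Q k)) i"
    by (simp add: coeff_sum sum_negf[symmetric] mult.commute)
  also have "\<dots> = - coeff (pderiv (pderiv (poly_of n a))) i"
    unfolding sum_dlog_root_discr_cofactor_poly[OF inj_on_roots_if_Dset[OF a x]] x ..
  finally show ?thesis .
qed

lemma GammaE_poly_rootpoly_ln_discr:
  assumes a: "a \<in> Dset n" and x: "poly_of n a = rootpoly n x"
  shows "GammaE n (\<lambda>y. poly (rootpoly n y) X) (\<lambda>y. ln (discr n (\<lambda>i. coeffun n i y))) x
       = - poly (pderiv (pderiv (poly_of n a))) X"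
proof -
  have inj: "inj_on x {..<n}"
    using inj_on_roots_if_Dset[OF a x] .
  have "partial k (\<lambda>y. ln (discr n (\<lambda>i. coeffun n i y))) x = dlog_root_discr n x k" if "k < n" for k
    unfolding partial_def discr_coeffun
    by (rule DERIV_imp_deriv, rule has_real_derivative_ln_root_discr[OF inj that])
  then have "GammaE n (\<lambda>y. poly (rootpoly n y) X) (\<lambda>y. ln (discr n (\<lambda>i. coeffun n i y))) x
      = - (\<Sum>k<n. dlog_root_discr n x k * poly (cofactor_poly n x k) X)"
    unfolding GammaE_def by (simp add: partial_poly_rootpoly sum_negf[symmetric] mult.commute)
  also have "\<dots> = - poly (\<Sum>k<n. Polynomial.smult (dlog_root_discr n x k) (cofactor_poly n x k)) X"
    by (simp add: poly_sum)
  also have "\<dots> = - poly (pderiv (pderiv (poly_of n a))) X"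
    unfolding sum_dlog_root_discr_cofactor_poly[OF inj] x ..
  finally show ?thesis .
qed

lemma poly_sum_Gmat_partial_ln_discr:
  assumes "a \<in> Dset n" and "poly_of n a = rootpoly n x"
  shows "(\<Sum>i<n. \<Sum>j<n. X ^ i * Gmat n i j a * partial j (\<lambda>b. ln (discr n b)) a)
       = - poly (pderiv (pderiv (poly_of n a))) X"
proof -
  have "(\<Sum>i<n. \<Sum>j<n. X ^ i * Gmat n i j a * partial j (\<lambda>b. ln (discr n b)) a)
      = (\<Sum>i<n. X ^ i * (- coeff (pderiv (pderiv (poly_of n a))) i))"
    by (rule sum.cong[OF refl])
       (simp add: sum_distrib_left[symmetric] mult.assoc sum_Gmat_partial_ln_discr[OF assms])
  also have "\<dots> = - poly (pderiv (pderiv (poly_of n a))) X"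
    by (subst poly_eq_sum_coeff_below[of n]) (simp_all add: coeff_pderiv coeff_poly_of sum_negf mult.commute)
  finally show ?thesis .
qed

theorem mainTheorem4:
  fixes n :: nat and a :: "nat \<Rightarrow> real"
  assumes "a \<in> Dset n"
  shows "discr n a = detn n (\<lambda>i j. Gmat n i j a)
    \<and> (\<forall>i<n. (\<Sum>j<n. Gmat n i j a * partial j (\<lambda>b. ln (discr n b)) a)
                 = 2 * (\<Sum>j<n. partial j (Gmat n i j) a))
    \<and> (\<forall>X::real. (\<Sum>i<n. \<Sum>j<n. X ^ i * Gmat n i j a * partial j (\<lambda>b. ln (discr n b)) a)
                 = - poly (pderiv (pderiv (poly_of n a))) X)
    \<and> (\<forall>x. poly_of n a = rootpoly n x \<longrightarrow>
           (\<forall>X::real. GammaE n (\<lambda>y. poly (rootpoly n y) X)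
                         (\<lambda>y. ln (discr n (\<lambda>i. coeffun n i y))) x
                      = - poly (pderiv (pderiv (poly_of n a))) X))"
proof -
  have rooted: "real_rooted n a"
    using real_rooted_if_Dset[OF assms] .
  then have x: "poly_of n a = rootpoly n (rootvec n a)"
    by (rule poly_of_rootvec)
  have "2 * (\<Sum>j<n. partial j (Gmat n i j) a) = - coeff (pderiv (pderiv (poly_of n a))) i" if "i < n" for i
    using sum_gram_poly_deriv[OF that] by (simp add: partial_Gmat[OF assms])
  then show ?thesis
    using rooted sum_Gmat_partial_ln_discr[OF assms x] poly_sum_Gmat_partial_ln_discr[OF assms x]
      GammaE_poly_rootpoly_ln_discr[OF assms]
    by (simp add: discr_eq_det_gram_poly Gmat_eq_gram_poly)
qed

end
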